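(* Let $n\ge 4$ with $4\nmid n$, and let $D_n$ be the tree on vertex set $\{1,\ldots,n\}$ with edges $\{1,3\}$, $\{2,3\}$ and $\{i,i+1\}$ for $3\le i\le n-1$, with adjacency matrix $A$. Let $e$ be the all-ones vector of length $n$ and $W(D_n)=[e,Ae,\ldots,A^{n-1}e]$. Then the Smith normal form of $W(D_n)$ is $$\operatorname{diag}[\underbrace{1,\ldots,1}_{\lceil n/2\rceil},\underbrace{2,\ldots,2}_{\lfloor n/2\rfloor-1},0].$$
   Context: For an integral $n\times n$ matrix $M$, its Smith normal form is the unique diagonal matrix $\operatorname{diag}[d_1,\ldots,d_n]$ with nonnegative integers $d_i$, $d_i\mid d_{i+1}$, such that $UMV=\operatorname{diag}[d_1,\ldots,d_n]$ for some unimodular integer matrices $U,V$. *)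

theory Defs
  imports "Jordan_Normal_Form.Determinant"
begin

definition unimodular_int :: "nat \<Rightarrow> int mat \<Rightarrow> bool" where
  "unimodular_int n U \<longleftrightarrow> U \<in> carrier_mat n n \<and> det U dvd 1"

definition is_smith_normal_form :: "nat \<Rightarrow> int mat \<Rightarrow> int mat \<Rightarrow> bool" where
  "is_smith_normal_form n M D \<longleftrightarrow>
     D \<in> carrier_mat n n \<and>
     (\<forall>i<n. \<forall>j<n. i \<noteq> j \<longrightarrow> D $$ (i,j) = 0) \<and>
     (\<forall>i<n. D $$ (i,i) \<ge> 0) \<and>
     (\<forall>i. i + 1 < n \<longrightarrow> D $$ (i,i) dvd D $$ (i+1,i+1)) \<and>
     (\<exists>U V. unimodular_int n U \<and> unimodular_int n V \<and> U * M * V = D)"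

definition Dn_edge :: "nat \<Rightarrow> nat \<Rightarrow> nat \<Rightarrow> bool" where
  "Dn_edge n u v \<longleftrightarrow>
     {u, v} = {1, 3} \<or> {u, v} = {2, 3} \<or> (\<exists>i. 3 \<le> i \<and> i \<le> n - 1 \<and> {u, v} = {i, i + 1})"

(* Adjacency matrix of D_n; row/column index k (0-based) corresponds to vertex k+1. *)
definition Dn_adj :: "nat \<Rightarrow> int mat" where
  "Dn_adj n = mat n n (\<lambda>(i, j). if Dn_edge n (i + 1) (j + 1) then 1 else 0)"

definition walk_matrix :: "nat \<Rightarrow> int mat \<Rightarrow> int mat" where
  "walk_matrix n A = mat n n (\<lambda>(i, j). ((A ^\<^sub>m j) *\<^sub>v vec n (\<lambda>_. 1)) $ i)"

end

theory Submission
  imports Defs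
begin

(* Let C_j be the polynomials with C_0 = 1, C_1 = x, C_2 = x^2 - 2 and C_(j+2) = x C_(j+1) - C_j.
   As C_j is monic of degree j, replacing the columns A^j e of W by C_j(A) e (and C_j(A) e by
   C_j(A) e - C_(n-1-j)(A) e for j >= n/2) is a unimodular column operation W V.  On D_n the vectors
   C_j(A) e have a closed form: C_(n-1)(A) e = 0, and C_j(A) e - C_(n-1-j)(A) e is twice a 0/1
   vector T_j.  Hence W V = P D with D the claimed diagonal matrix.  The columns of P are e, the
   vectors C_j(A) e for j < n/2, the vectors -T_j and a unit vector; every unit vector is an
   integer combination of them, so P is unimodular.  In this elimination the path indicators
   satisfy a recurrence of period 4 modulo the last unit vector, which is why 4 must not
   divide n. *)

lemma pow_mat_Suc_left: "A \<in> carrier_mat n n \<Longrightarrow> A ^\<^sub>m Suc k = A * A ^\<^sub>m k"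
proof (induction k)
  case (Suc k)
  then have "A ^\<^sub>m Suc (Suc k) = (A * A ^\<^sub>m k) * A"
    by simp
  also have "\<dots> = A * (A ^\<^sub>m k * A)"
    using Suc.prems by (intro assoc_mult_mat) auto
  finally show ?case
    by simp
qed simp

definition vertex_ind :: "nat \<Rightarrow> nat \<Rightarrow> int" where
  "vertex_ind p v = (if v = p then 1 else 0)"

definition in_col_span :: "'a::comm_ring_1 mat \<Rightarrow> (nat \<Rightarrow> 'a) \<Rightarrow> bool" where
  "in_col_span P f \<longleftrightarrow> (\<exists>y. \<forall>v<dim_row P. f v = (\<Sum>c<dim_col P. P $$ (v, c) * y c))"

lemma in_col_span_cong:
  "in_col_span P f \<Longrightarrow> (\<And>v. v < dim_row P \<Longrightarrow> g v = f v) \<Longrightarrow> in_col_span P g"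
  unfolding in_col_span_def by auto

lemma in_col_span_add:
  assumes "in_col_span P f" "in_col_span P g"
  shows "in_col_span P (\<lambda>v. f v + g v)"
proof -
  obtain y z where "\<forall>v<dim_row P. f v = (\<Sum>c<dim_col P. P $$ (v, c) * y c)"
    "\<forall>v<dim_row P. g v = (\<Sum>c<dim_col P. P $$ (v, c) * z c)"
    using assms unfolding in_col_span_def by blast
  then show ?thesis
    unfolding in_col_span_def
    by (intro exI[of _ "\<lambda>c. y c + z c"]) (simp add: distrib_left sum.distrib)
qed

lemma in_col_span_mult:
  assumes "in_col_span P f"
  shows "in_col_span P (\<lambda>v. k * f v)"
proof -
  obtain y where "\<forall>v<dim_row P. f v = (\<Sum>c<dim_col P. P $$ (v, c) * y c)"
    using assms unfolding in_col_span_def by blast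
  then show ?thesis
    unfolding in_col_span_def
    by (intro exI[of _ "\<lambda>c. k * y c"]) (simp add: sum_distrib_left algebra_simps)
qed

lemma in_col_span_diff:
  "in_col_span P f \<Longrightarrow> in_col_span P g \<Longrightarrow> in_col_span P (\<lambda>v. f v - g v)"
  using in_col_span_add[of P f "\<lambda>v. (- 1) * g v"] in_col_span_mult[of P g "- 1"] by simp

lemma in_col_span_zero: "in_col_span P (\<lambda>_. 0)"
  unfolding in_col_span_def by (intro exI[of _ "\<lambda>_. 0"]) simp

lemma in_col_span_col:
  assumes "c < dim_col P"
  shows "in_col_span P (\<lambda>v. P $$ (v, c))"
proof -
  have "P $$ (v, c) = (\<Sum>i<dim_col P. P $$ (v, i) * (if i = c then 1 else 0))" for v
    using assms by (simp add: if_distrib cong: if_cong)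
  then show ?thesis
    unfolding in_col_span_def by (intro exI[of _ "\<lambda>i. if i = c then 1 else 0"]) blast
qed

lemma in_col_span_unit_mult:
  assumes "in_col_span P (\<lambda>v. c * f v)" "c * c = 1"
  shows "in_col_span P f"
  using in_col_span_mult[OF assms(1), of c] by (simp add: mult.assoc[symmetric] assms(2))

lemma unimodular_left_inverse_of_right_inverse:
  assumes P: "P \<in> carrier_mat n n" and X: "X \<in> carrier_mat n n" and PX: "P * X = 1\<^sub>m n"
  shows "\<exists>U. unimodular_int n U \<and> U * P = 1\<^sub>m n"
proof -
  have det: "det P * det X = 1"
    using det_mult[OF P X] PX by simp
  define U where "U = det X \<cdot>\<^sub>m adj_mat P"
  have U: "U \<in> carrier_mat n n"
    unfolding U_def using adj_mat(1)[OF P] by simp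
  have "U * P = det X \<cdot>\<^sub>m (adj_mat P * P)"
    unfolding U_def by (rule mult_smult_assoc_mat[OF adj_mat(1)[OF P] P])
  also have "\<dots> = det X \<cdot>\<^sub>m (det P \<cdot>\<^sub>m 1\<^sub>m n)"
    using adj_mat(3)[OF P] by simp
  also have "\<dots> = 1\<^sub>m n"
    using det by (intro eq_matI) (auto simp: algebra_simps)
  finally have UP: "U * P = 1\<^sub>m n" .
  then have "det U * det P = 1"
    using det_mult[OF U P] by simp
  then have "det U dvd 1"
    by (metis dvdI)
  with U UP show ?thesis
    unfolding unimodular_int_def by blast
qed

lemma unimodular_left_inverse_if_vertex_ind_in_col_span:
  assumes P: "P \<in> carrier_mat n n" and span: "\<And>p. p < n \<Longrightarrow> in_col_span P (vertex_ind p)"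
  shows "\<exists>U. unimodular_int n U \<and> U * P = 1\<^sub>m n"
proof -
  obtain Y where Y: "\<And>p v. p < n \<Longrightarrow> v < n \<Longrightarrow> vertex_ind p v = (\<Sum>c<n. P $$ (v, c) * Y p c)"
    using span P unfolding in_col_span_def by (metis carrier_matD)
  define X where "X = mat n n (\<lambda>(c, p). Y p c)"
  have "P * X = 1\<^sub>m n"
  proof (rule eq_matI)
    fix v p
    assume "v < dim_row (1\<^sub>m n)" "p < dim_col (1\<^sub>m n)"
    then have vp: "v < n" "p < n"
      by auto
    have "(P * X) $$ (v, p) = (\<Sum>c<n. P $$ (v, c) * Y p c)"
      using P vp by (simp add: X_def scalar_prod_def lessThan_atLeast0)
    also have "\<dots> = 1\<^sub>m n $$ (v, p)"
      using Y[OF vp(2,1)] vp by (simp add: vertex_ind_def)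
    finally show "(P * X) $$ (v, p) = 1\<^sub>m n $$ (v, p)" .
  qed (use P in \<open>auto simp: X_def\<close>)
  then show ?thesis
    using P by (intro unimodular_left_inverse_of_right_inverse[of _ n X]) (auto simp: X_def)
qed

lemma Dn_edge_Suc_iff:
  assumes "u < n" "v < n"
  shows "Dn_edge n (v + 1) (u + 1) \<longleftrightarrow>
    (v \<le> 1 \<and> u = 2) \<or> (v = 2 \<and> u \<le> 1) \<or> (2 \<le> v \<and> u = v + 1) \<or> (2 \<le> u \<and> v = u + 1)"
proof -
  have path_edge: "(\<exists>i. 3 \<le> i \<and> i \<le> n - 1 \<and> {v + 1, u + 1} = {i, i + 1}) \<longleftrightarrow>
      (2 \<le> v \<and> u = v + 1) \<or> (2 \<le> u \<and> v = u + 1)"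
  proof
    assume "\<exists>i. 3 \<le> i \<and> i \<le> n - 1 \<and> {v + 1, u + 1} = {i, i + 1}"
    then show "(2 \<le> v \<and> u = v + 1) \<or> (2 \<le> u \<and> v = u + 1)"
      by (auto simp: doubleton_eq_iff)
  next
    assume "(2 \<le> v \<and> u = v + 1) \<or> (2 \<le> u \<and> v = u + 1)"
    then show "\<exists>i. 3 \<le> i \<and> i \<le> n - 1 \<and> {v + 1, u + 1} = {i, i + 1}"
    proof
      assume "2 \<le> v \<and> u = v + 1"
      with assms show ?thesis
        by (intro exI[of _ "v + 1"]) auto
    next
      assume "2 \<le> u \<and> v = u + 1"
      with assms show ?thesis
        by (intro exI[of _ "u + 1"]) auto
    qed
  qed
  show ?thesis
    unfolding Dn_edge_def path_edge by (auto simp: doubleton_eq_iff)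
qed

definition Dn_apply :: "nat \<Rightarrow> (nat \<Rightarrow> int) \<Rightarrow> nat \<Rightarrow> int" where
  "Dn_apply n x v = (\<Sum>u<n. Dn_adj n $$ (v, u) * x u)"

lemma Dn_apply_eq:
  assumes "4 \<le> n" "v < n"
  shows "Dn_apply n x v =
    (if v \<le> 1 then x 2 else if v = 2 then x 0 + x 1 + x 3
     else if v = n - 1 then x (n - 2) else x (v - 1) + x (v + 1))"
proof -
  have "Dn_apply n x v = (\<Sum>u<n. if u \<in> {u. Dn_edge n (v + 1) (u + 1)} then x u else 0)"
    unfolding Dn_apply_def Dn_adj_def using assms(2) by (intro sum.cong) auto
  also have "\<dots> = sum x ({..<n} \<inter> {u. Dn_edge n (v + 1) (u + 1)})"
    by (simp add: sum.inter_restrict)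
  also have "{..<n} \<inter> {u. Dn_edge n (v + 1) (u + 1)} = {u. u < n \<and>
      ((v \<le> 1 \<and> u = 2) \<or> (v = 2 \<and> u \<le> 1) \<or> (2 \<le> v \<and> u = v + 1) \<or> (2 \<le> u \<and> v = u + 1))}"
    using assms(2) Dn_edge_Suc_iff by auto
  also have "\<dots> =
      (if v \<le> 1 then {2} else if v = 2 then {0, 1, 3} else if v = n - 1 then {n - 2} else {v - 1, v + 1})"
    using assms by auto
  finally show ?thesis
    using assms by auto
qed

lemma Dn_apply_sum:
  "Dn_apply n (\<lambda>u. \<Sum>i\<in>I. c i * x i u) v = (\<Sum>i\<in>I. c i * Dn_apply n (x i) v)"
  unfolding Dn_apply_def
  by (simp add: sum_distrib_left sum_distrib_right algebra_simps sum.swap[of _ I])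

lemma Dn_apply_cong: "(\<And>u. u < n \<Longrightarrow> x u = y u) \<Longrightarrow> Dn_apply n x v = Dn_apply n y v"
  unfolding Dn_apply_def by (intro sum.cong) auto

lemma Dn_apply_mult: "Dn_apply n (\<lambda>u. k * x u) v = k * Dn_apply n x v"
  unfolding Dn_apply_def by (simp add: sum_distrib_left algebra_simps)

definition walk_vec :: "nat \<Rightarrow> nat \<Rightarrow> nat \<Rightarrow> int" where
  "walk_vec n i v = (Dn_adj n ^\<^sub>m i *\<^sub>v vec n (\<lambda>_. 1)) $ v"

lemma walk_vec_0: "v < n \<Longrightarrow> walk_vec n 0 v = 1"
  unfolding walk_vec_def by (simp add: Dn_adj_def)

lemma walk_vec_Suc:
  assumes "v < n"
  shows "walk_vec n (Suc i) v = Dn_apply n (walk_vec n i) v"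
proof -
  let ?A = "Dn_adj n" and ?e = "vec n (\<lambda>_. 1) :: int vec"
  have A: "?A \<in> carrier_mat n n"
    by (simp add: Dn_adj_def)
  have "?A ^\<^sub>m Suc i *\<^sub>v ?e = ?A *\<^sub>v (?A ^\<^sub>m i *\<^sub>v ?e)"
    unfolding pow_mat_Suc_left[OF A] using A by (intro assoc_mult_mat_vec) auto
  then show ?thesis
    using assms A unfolding walk_vec_def Dn_apply_def
    by (simp add: scalar_prod_def lessThan_atLeast0)
qed

text \<open>\<open>cheb_coeff j i\<close> is the coefficient of \<open>x ^ i\<close> in \<open>C\<^sub>j\<close>, where
  \<open>C\<^sub>j (t + 1/t) = t ^ j + t ^ -j\<close> for \<open>j \<ge> 1\<close> and \<open>C\<^sub>0 = 1\<close>.\<close>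

fun cheb_coeff :: "nat \<Rightarrow> nat \<Rightarrow> int" where
  "cheb_coeff 0 i = (if i = 0 then 1 else 0)"
| "cheb_coeff (Suc 0) i = (if i = 1 then 1 else 0)"
| "cheb_coeff (Suc (Suc j)) i =
    (if i = 0 then 0 else cheb_coeff (Suc j) (i - 1)) - (if j = 0 then 2 else 1) * cheb_coeff j i"

lemma cheb_coeff_eq_0: "j < i \<Longrightarrow> cheb_coeff j i = 0"
  by (induction j i rule: cheb_coeff.induct) auto

lemma cheb_coeff_diag: "cheb_coeff j j = 1"
  by (induction j rule: induct_nat_012) (simp_all add: cheb_coeff_eq_0)

definition cheb_walk :: "nat \<Rightarrow> nat \<Rightarrow> nat \<Rightarrow> int" where
  "cheb_walk n j v = (\<Sum>i<n. cheb_coeff j i * walk_vec n i v)"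

lemma cheb_walk_0:
  assumes "v < n"
  shows "cheb_walk n 0 v = 1"
proof -
  have "cheb_walk n 0 v = (\<Sum>i<n. if i = 0 then walk_vec n i v else 0)"
    unfolding cheb_walk_def by (intro sum.cong) auto
  with assms show ?thesis
    by (simp add: walk_vec_0)
qed

lemma cheb_walk_1:
  assumes "v < n" "2 \<le> n"
  shows "cheb_walk n 1 v = Dn_apply n (\<lambda>_. 1) v"
proof -
  have "cheb_walk n 1 v = (\<Sum>i<n. if i = 1 then walk_vec n i v else 0)"
    unfolding cheb_walk_def by (intro sum.cong) auto
  also have "\<dots> = walk_vec n 1 v"
    using assms by simp
  also have "\<dots> = Dn_apply n (\<lambda>_. 1) v"
    using assms by (simp add: walk_vec_Suc walk_vec_0 cong: Dn_apply_cong)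
  finally show ?thesis .
qed

lemma cheb_walk_Suc_Suc:
  assumes "v < n" "Suc (Suc j) < n"
  shows "cheb_walk n (Suc (Suc j)) v =
    Dn_apply n (cheb_walk n (Suc j)) v - (if j = 0 then 2 else 1) * cheb_walk n j v"
proof -
  obtain m where m: "n = Suc m"
    using assms by (cases n) auto
  have top: "cheb_coeff (Suc j) m = 0"
    using assms m by (intro cheb_coeff_eq_0) auto
  have "(\<Sum>i<n. (if i = 0 then 0 else cheb_coeff (Suc j) (i - 1)) * walk_vec n i v) =
      (\<Sum>i<m. cheb_coeff (Suc j) i * walk_vec n (Suc i) v)"
    unfolding m sum.lessThan_Suc_shift by simp
  also have "\<dots> = (\<Sum>i<n. cheb_coeff (Suc j) i * walk_vec n (Suc i) v)"
    using top unfolding m by simp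
  finally have shift: "(\<Sum>i<n. (if i = 0 then 0 else cheb_coeff (Suc j) (i - 1)) * walk_vec n i v) =
      (\<Sum>i<n. cheb_coeff (Suc j) i * walk_vec n (Suc i) v)" .
  have "cheb_walk n (Suc (Suc j)) v =
      (\<Sum>i<n. cheb_coeff (Suc j) i * walk_vec n (Suc i) v) - (if j = 0 then 2 else 1) * cheb_walk n j v"
    unfolding cheb_walk_def shift[symmetric]
    by (simp add: algebra_simps sum_subtractf sum_distrib_left)
  also have "(\<Sum>i<n. cheb_coeff (Suc j) i * walk_vec n (Suc i) v) = Dn_apply n (cheb_walk n (Suc j)) v"
    unfolding cheb_walk_def Dn_apply_sum walk_vec_Suc[OF assms(1)] ..
  finally show ?thesis .
qed

text \<open>Closed form of \<open>C\<^sub>j(A) e\<close>, found by the method of images: a vertex \<open>v \<ge> 2\<close> is the point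
  \<open>t = v - 1\<close> of a path folded at \<open>t = 0\<close>, where the two leaves sit, and reflected with a change
  of sign at \<open>t = n - 1\<close>.\<close>

definition fold_weight :: "int \<Rightarrow> int \<Rightarrow> int" where
  "fold_weight M t = (if t = 0 then 2 else if \<bar>t\<bar> < M then 1 else if \<bar>t\<bar> = M then 0 else -1)"

definition cheb_closed :: "nat \<Rightarrow> int \<Rightarrow> nat \<Rightarrow> int" where
  "cheb_closed n j v = (if v \<le> 1 then fold_weight (int n - 1) j
     else fold_weight (int n - 1) (int v - 1 + j) + fold_weight (int n - 1) (int v - 1 - j))"

lemma fold_weight_minus_commute: "fold_weight M (a - b) = fold_weight M (b - a)"
  unfolding fold_weight_def by (simp add: abs_minus_commute)

lemma fold_weight_uminus: "fold_weight M (- t) = fold_weight M t"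
  unfolding fold_weight_def by simp

lemma fold_weight_reflect: "\<bar>t\<bar> < M \<Longrightarrow> fold_weight M (M + t) = - fold_weight M (M - t)"
  unfolding fold_weight_def by auto

lemma Dn_apply_cheb_closed:
  assumes n: "5 \<le> n" and v: "v < n" and c: "\<bar>c\<bar> < int n - 1"
  shows "Dn_apply n (cheb_closed n c) v = cheb_closed n (c + 1) v + cheb_closed n (c - 1) v"
proof -
  define M where "M = int n - 1"
  have "4 \<le> n"
    using n by simp
  note Dn_apply = Dn_apply_eq[OF this v]
  have sym: "fold_weight M (1 - c) = fold_weight M (c - 1)"
    by (rule fold_weight_minus_commute)
  consider "v \<le> 1" | "v = 2" | "v = n - 1" | "3 \<le> v" "v \<le> n - 2"
    using n v by linarith
  then show ?thesis
  proof cases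
    case 1
    then show ?thesis
      using n sym unfolding Dn_apply cheb_closed_def M_def by (simp add: algebra_simps)
  next
    case 2
    have "fold_weight M (- 1 - c) = fold_weight M (c + 1)"
      using fold_weight_minus_commute[of M "-1" c] by (simp add: algebra_simps)
    with 2 n sym show ?thesis
      unfolding Dn_apply cheb_closed_def M_def by (simp add: fold_weight_uminus algebra_simps)
  next
    case 3
    have "fold_weight M (M + c) = - fold_weight M (M - c)"
      using c unfolding M_def by (intro fold_weight_reflect) auto
    moreover have "Dn_apply n (cheb_closed n c) v = cheb_closed n c (n - 2)"
      unfolding Dn_apply using 3 n by auto
    moreover have "cheb_closed n c (n - 2) = fold_weight M (M - 2 + c) + fold_weight M (M - 2 - c)"
      using n unfolding cheb_closed_def M_def by (auto simp: algebra_simps)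
    moreover have "cheb_closed n (c + 1) v = fold_weight M (M + c) + fold_weight M (M - 2 - c)"
      using 3 n unfolding cheb_closed_def M_def by (auto simp: algebra_simps)
    moreover have "cheb_closed n (c - 1) v = fold_weight M (M + c - 2) + fold_weight M (M - c)"
      using 3 n unfolding cheb_closed_def M_def by (auto simp: algebra_simps)
    ultimately show ?thesis
      by (simp add: algebra_simps)
  next
    case 4
    then have "int (v - 1) = int v - 1" "\<not> v \<le> 1" "v \<noteq> 2" "\<not> v - 1 \<le> 1" "v \<noteq> n - 1"
      using n by auto
    then show ?thesis
      using n unfolding Dn_apply cheb_closed_def by (simp add: algebra_simps)
  qed
qed

lemma cheb_closed_0: "v < n \<Longrightarrow> 3 \<le> n \<Longrightarrow> cheb_closed n 0 v = 2"
  unfolding cheb_closed_def fold_weight_def by auto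

lemma cheb_closed_uminus: "cheb_closed n (- j) v = cheb_closed n j v"
  using fold_weight_uminus[of "int n - 1" "int v - 1 - j"]
  unfolding cheb_closed_def by (simp add: fold_weight_uminus algebra_simps)

lemma cheb_closed_1:
  assumes "v < n" "5 \<le> n"
  shows "cheb_closed n 1 v = Dn_apply n (\<lambda>_. 1) v"
proof -
  have "2 * cheb_closed n 1 v = Dn_apply n (cheb_closed n 0) v"
    using Dn_apply_cheb_closed[OF assms(2,1), of 0] assms cheb_closed_uminus[of n 1 v] by simp
  also have "\<dots> = Dn_apply n (\<lambda>_. 2 * 1) v"
    using assms by (intro Dn_apply_cong) (simp add: cheb_closed_0)
  finally show ?thesis
    unfolding Dn_apply_mult by simp
qed

lemma cheb_walk_eq_closed:
  assumes n: "5 \<le> n" and "1 \<le> j" "j \<le> n - 1" "v < n"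
  shows "cheb_walk n j v = cheb_closed n (int j) v"
  using assms(2-)
proof (induction j arbitrary: v rule: less_induct)
  case (less j)
  show ?case
  proof (cases "j = 1")
    case True
    with less.prems n show ?thesis
      using cheb_walk_1[of v n] cheb_closed_1[of v n] by simp
  next
    case False
    then obtain i where i: "j = Suc (Suc i)"
      using less.prems(1) by (metis One_nat_def Suc_le_D le_SucE)
    have "Dn_apply n (cheb_walk n (Suc i)) v = Dn_apply n (cheb_closed n (int (Suc i))) v"
      using less i by (intro Dn_apply_cong) auto
    also have "\<dots> = cheb_closed n (int j) v + cheb_closed n (int i) v"
      using less i n by (subst Dn_apply_cheb_closed) (auto simp: algebra_simps)
    finally have rec: "Dn_apply n (cheb_walk n (Suc i)) v = cheb_closed n (int j) v + cheb_closed n (int i) v" .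
    show ?thesis
    proof (cases "i = 0")
      case True
      with i less rec n show ?thesis
        by (simp add: cheb_walk_Suc_Suc cheb_walk_0 cheb_closed_0)
    next
      case False
      with i less rec n show ?thesis
        by (simp add: cheb_walk_Suc_Suc)
    qed
  qed
qed

lemma cheb_walk_top:
  assumes n: "5 \<le> n" and v: "v < n"
  shows "cheb_walk n (n - 1) v = 0"
proof (cases "v \<le> 1")
  case True
  with n v show ?thesis
    by (simp add: cheb_walk_eq_closed cheb_closed_def fold_weight_def)
next
  case False
  define M where "M = int n - 1"
  define t where "t = int v - 1"
  have t: "\<bar>t\<bar> < M"
    using False v unfolding t_def M_def by auto
  have "cheb_walk n (n - 1) v = fold_weight M (M + t) + fold_weight M (t - M)"
    using False n v unfolding M_def t_def
    by (simp add: cheb_walk_eq_closed cheb_closed_def algebra_simps)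
  also have "\<dots> = 0"
    using fold_weight_reflect[OF t] fold_weight_minus_commute[of M t M] by simp
  finally show ?thesis .
qed

definition path_ind :: "nat \<Rightarrow> nat \<Rightarrow> int" where
  "path_ind k v = (if 2 \<le> v \<and> v \<le> k then 1 else 0)"

definition F_vec :: "nat \<Rightarrow> nat \<Rightarrow> nat \<Rightarrow> int" where
  "F_vec n j v = vertex_ind 0 v + vertex_ind 1 v + vertex_ind (j + 1) v
     + path_ind (n - 1 - j) v + path_ind (n - j) v"

definition T_vec :: "nat \<Rightarrow> nat \<Rightarrow> nat \<Rightarrow> int" where
  "T_vec n j v = path_ind (n - 1 - j) v - path_ind j v"

lemma ones_eq_ind: "v < n \<Longrightarrow> 1 = vertex_ind 0 v + vertex_ind 1 v + path_ind (n - 1) v"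
  unfolding vertex_ind_def path_ind_def by auto

lemma path_ind_Suc: "1 \<le> k \<Longrightarrow> path_ind (Suc k) v = path_ind k v + vertex_ind (Suc k) v"
  unfolding vertex_ind_def path_ind_def by auto

lemma path_ind_last: "3 \<le> n \<Longrightarrow> path_ind (n - 1) v = path_ind (n - 2) v + vertex_ind (n - 1) v"
  unfolding vertex_ind_def path_ind_def by auto

lemma path_ind_le_1: "k \<le> 1 \<Longrightarrow> path_ind k v = 0"
  unfolding path_ind_def by auto

lemma path_ind_ge: "v < n \<Longrightarrow> n - 1 \<le> k \<Longrightarrow> path_ind k v = path_ind (n - 1) v"
  unfolding path_ind_def by auto

lemma cheb_closed_eq_F_vec:
  assumes "1 \<le> j" "j \<le> n - 2" "v < n" "5 \<le> n"
  shows "cheb_closed n (int j) v = F_vec n j v"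
proof (cases "v \<le> 1")
  case True
  with assms show ?thesis
    unfolding cheb_closed_def fold_weight_def F_vec_def vertex_ind_def path_ind_def by auto
next
  case False
  with assms have "fold_weight (int n - 1) (int v - 1 - int j) = (if v = j + 1 then 2 else 1)"
    "fold_weight (int n - 1) (int v - 1 + int j) = (if v + j < n then 1 else if v + j = n then 0 else -1)"
    unfolding fold_weight_def by auto
  with False show ?thesis
    unfolding cheb_closed_def F_vec_def vertex_ind_def path_ind_def by auto
qed

lemma F_vec_diff:
  assumes "1 \<le> j" "j < n div 2"
  shows "F_vec n j v - F_vec n (n - 1 - j) v = 2 * T_vec n j v"
  using assms unfolding F_vec_def T_vec_def vertex_ind_def path_ind_def by auto

definition last_coeff :: "nat \<Rightarrow> int" where
  "last_coeff j = (if j mod 4 = 0 \<or> j mod 4 = 3 then 1 else 0)"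

lemma last_coeff_add_2: "last_coeff (j + 2) = 1 - last_coeff j"
  unfolding last_coeff_def by (auto simp: mod_add_left_eq[symmetric]; presburger)

context
  fixes n :: nat and P :: "int mat"
  assumes n_ge_5: "5 \<le> n" and n_not_dvd: "\<not> 4 dvd n" and P_rows: "dim_row P = n"
    and ones_in: "in_col_span P (\<lambda>_. 1)"
    and vertex_0_in: "in_col_span P (vertex_ind 0)"
    and F_in: "\<And>j. 1 \<le> j \<Longrightarrow> j < (n + 1) div 2 \<Longrightarrow> in_col_span P (F_vec n j)"
    and T_in: "\<And>j. 1 \<le> j \<Longrightarrow> j < n div 2 \<Longrightarrow> in_col_span P (T_vec n j)"
begin

lemma path_ind_2_in_col_span: "in_col_span P (path_ind 2)"
proof -
  have "in_col_span P (\<lambda>v. F_vec n 1 v - 1 - T_vec n 1 v)"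
    using n_ge_5 by (intro in_col_span_diff F_in T_in ones_in) auto
  then show ?thesis
  proof (rule in_col_span_cong)
    fix v
    assume "v < dim_row P"
    then have "1 = vertex_ind 0 v + vertex_ind 1 v + path_ind (n - 1) v"
      by (simp add: P_rows ones_eq_ind)
    then show "path_ind 2 v = F_vec n 1 v - 1 - T_vec n 1 v"
      using path_ind_Suc[of 1 v] unfolding F_vec_def T_vec_def
      by (simp add: path_ind_le_1 numeral_2_eq_2)
  qed
qed

lemma path_ind_recurrence_in_col_span:
  assumes "2 \<le> j" "j < n div 2"
  shows "in_col_span P (\<lambda>v. path_ind (j + 1) v + path_ind (j - 1) v - vertex_ind (n - 1) v)"
proof -
  have "in_col_span P (\<lambda>v. F_vec n j v - 1 - T_vec n j v - T_vec n (j - 1) v + T_vec n 1 v)"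
    using assms by (intro in_col_span_diff in_col_span_add F_in T_in ones_in) auto
  then show ?thesis
  proof (rule in_col_span_cong)
    fix v
    assume "v < dim_row P"
    then have "1 = vertex_ind 0 v + vertex_ind 1 v + path_ind (n - 1) v"
      by (simp add: P_rows ones_eq_ind)
    moreover have "path_ind (j + 1) v = path_ind j v + vertex_ind (j + 1) v"
      using assms path_ind_Suc[of j v] by simp
    moreover have "n - 1 - (j - 1) = n - j"
      using assms by simp
    ultimately show "path_ind (j + 1) v + path_ind (j - 1) v - vertex_ind (n - 1) v =
        F_vec n j v - 1 - T_vec n j v - T_vec n (j - 1) v + T_vec n 1 v"
      using n_ge_5 path_ind_last[of n v]
      unfolding F_vec_def T_vec_def by (simp add: path_ind_le_1 numeral_2_eq_2)
  qed
qed

lemma path_ind_minus_last_in_col_span: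
  "1 \<le> j \<Longrightarrow> j \<le> n div 2 \<Longrightarrow>
    in_col_span P (\<lambda>v. path_ind j v - last_coeff j * vertex_ind (n - 1) v)"
proof (induction j rule: induct_nat_012)
  case 1
  show ?case
    by (rule in_col_span_cong[OF in_col_span_zero]) (simp add: path_ind_le_1 last_coeff_def)
next
  case (ge2 i)
  show ?case
  proof (cases "i = 0")
    case True
    show ?thesis
      by (rule in_col_span_cong[OF path_ind_2_in_col_span]) (simp add: True last_coeff_def numeral_2_eq_2)
  next
    case False
    have "in_col_span P (\<lambda>v. path_ind (i + 2) v + path_ind i v - vertex_ind (n - 1) v)"
      using path_ind_recurrence_in_col_span[of "i + 1"] ge2.prems False by simp
    moreover have "in_col_span P (\<lambda>v. path_ind i v - last_coeff i * vertex_ind (n - 1) v)"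
      using ge2 False by simp
    ultimately have "in_col_span P (\<lambda>v. (path_ind (i + 2) v + path_ind i v - vertex_ind (n - 1) v)
        - (path_ind i v - last_coeff i * vertex_ind (n - 1) v))"
      by (rule in_col_span_diff)
    then show ?thesis
      by (rule in_col_span_cong) (simp add: last_coeff_add_2[simplified] algebra_simps)
  qed
qed simp

lemma last_vertex_multiple_in_col_span_even:
  assumes "even n"
  shows "in_col_span P (\<lambda>v. (last_coeff (n div 2) - last_coeff (n div 2 - 1)) * vertex_ind (n - 1) v)"
proof -
  define f where "f = n div 2 - 1"
  have f: "1 \<le> f" "n = 2 * f + 2" "n div 2 = f + 1"
    using n_ge_5 assms unfolding f_def by auto
  then have "in_col_span P (\<lambda>v. T_vec n f v
      - (path_ind (f + 1) v - last_coeff (f + 1) * vertex_ind (n - 1) v)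
      + (path_ind f v - last_coeff f * vertex_ind (n - 1) v))"
    by (intro in_col_span_add in_col_span_diff T_in path_ind_minus_last_in_col_span) auto
  then show ?thesis
    unfolding f(3) f_def[symmetric] by (rule in_col_span_cong) (simp add: f(2) T_vec_def algebra_simps)
qed

lemma last_vertex_multiple_in_col_span_odd:
  assumes "odd n"
  shows "in_col_span P (\<lambda>v. (1 - 2 * last_coeff (n div 2 - 1)) * vertex_ind (n - 1) v)"
proof -
  define f where "f = n div 2 - 1"
  have f: "1 \<le> f" "n = 2 * f + 3"
    using n_ge_5 assms unfolding f_def by presburger+
  then have "in_col_span P (\<lambda>v. 2 * (path_ind f v - last_coeff f * vertex_ind (n - 1) v)
      - (F_vec n (f + 1) v - 1 - 2 * T_vec n f v + T_vec n 1 v))"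
    by (intro in_col_span_add in_col_span_diff in_col_span_mult F_in T_in ones_in
        path_ind_minus_last_in_col_span) auto
  then show ?thesis
    unfolding f_def[symmetric]
  proof (rule in_col_span_cong)
    fix v
    assume "v < dim_row P"
    then have "1 = vertex_ind 0 v + vertex_ind 1 v + path_ind (n - 1) v"
      by (simp add: P_rows ones_eq_ind)
    moreover have "path_ind (f + 2) v = path_ind (f + 1) v + vertex_ind (f + 2) v"
      using f path_ind_Suc[of "f + 1" v] by simp
    ultimately show "(1 - 2 * last_coeff f) * vertex_ind (n - 1) v =
        2 * (path_ind f v - last_coeff f * vertex_ind (n - 1) v)
        - (F_vec n (f + 1) v - 1 - 2 * T_vec n f v + T_vec n 1 v)"
      using n_ge_5 path_ind_last[of n v]
      unfolding F_vec_def T_vec_def f(2) by (simp add: path_ind_le_1 algebra_simps)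
  qed
qed

lemma last_vertex_in_col_span: "in_col_span P (vertex_ind (n - 1))"
proof (cases "even n")
  case True
  define f where "f = n div 2 - 1"
  have "n = 2 * f + 2" "n div 2 = f + 1"
    using n_ge_5 True unfolding f_def by auto
  then have "(f + 1) mod 4 = 1 \<and> f mod 4 = 0 \<or> (f + 1) mod 4 = 3 \<and> f mod 4 = 2"
    using n_not_dvd by presburger
  then have "(last_coeff (n div 2) - last_coeff f) * (last_coeff (n div 2) - last_coeff f) = 1"
    unfolding \<open>n div 2 = f + 1\<close> last_coeff_def by auto
  with last_vertex_multiple_in_col_span_even[OF True] show ?thesis
    unfolding f_def by (rule in_col_span_unit_mult)
next
  case False
  have "(1 - 2 * last_coeff (n div 2 - 1)) * (1 - 2 * last_coeff (n div 2 - 1)) = 1"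
    unfolding last_coeff_def by auto
  with last_vertex_multiple_in_col_span_odd[OF False] show ?thesis
    by (rule in_col_span_unit_mult)
qed

lemma path_ind_in_col_span: "in_col_span P (path_ind k)"
proof -
  have low: "in_col_span P (path_ind k)" if "k \<le> n div 2" for k
  proof (cases "k = 0")
    case True
    show ?thesis
      by (rule in_col_span_cong[OF in_col_span_zero]) (simp add: True path_ind_le_1)
  next
    case False
    have "in_col_span P (\<lambda>v. (path_ind k v - last_coeff k * vertex_ind (n - 1) v)
        + last_coeff k * vertex_ind (n - 1) v)"
      using False that
      by (intro in_col_span_add in_col_span_mult path_ind_minus_last_in_col_span
          last_vertex_in_col_span) auto
    then show ?thesis
      by (rule in_col_span_cong) simp
  qed
  have mid: "in_col_span P (path_ind k)" if "k \<le> n - 2" for k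
  proof (cases "k \<le> n div 2")
    case False
    have k: "n - 1 - (n - 1 - k) = k"
      using that n_ge_5 by simp
    have "in_col_span P (\<lambda>v. T_vec n (n - 1 - k) v + path_ind (n - 1 - k) v)"
      using False that by (intro in_col_span_add T_in low) auto
    then show ?thesis
      by (rule in_col_span_cong) (unfold T_vec_def k, simp)
  qed (rule low)
  show ?thesis
  proof (cases "k \<le> n - 2")
    case False
    have "in_col_span P (\<lambda>v. path_ind (n - 2) v + vertex_ind (n - 1) v)"
      by (intro in_col_span_add mid last_vertex_in_col_span) simp
    then show ?thesis
    proof (rule in_col_span_cong)
      fix v
      assume "v < dim_row P"
      then have "path_ind k v = path_ind (n - 1) v"
        using path_ind_ge[of v n k] False P_rows by simp
      then show "path_ind k v = path_ind (n - 2) v + vertex_ind (n - 1) v"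
        using path_ind_last[of n v] n_ge_5 by simp
    qed
  qed (rule mid)
qed

lemma vertex_ind_in_col_span: "in_col_span P (vertex_ind p)"
proof -
  consider "p = 0" | "p = 1" | "2 \<le> p"
    by linarith
  then show ?thesis
  proof cases
    case 1
    then show ?thesis
      using vertex_0_in by simp
  next
    case 2
    have "in_col_span P (\<lambda>v. 1 - vertex_ind 0 v - path_ind (n - 1) v)"
      by (intro in_col_span_diff ones_in vertex_0_in path_ind_in_col_span)
    then show ?thesis
    proof (rule in_col_span_cong)
      fix v
      assume "v < dim_row P"
      then have "v < n"
        by (simp add: P_rows)
      show "vertex_ind p v = 1 - vertex_ind 0 v - path_ind (n - 1) v"
        using ones_eq_ind[OF \<open>v < n\<close>] unfolding 2 by linarith
    qed
  next
    case 3
    have "in_col_span P (\<lambda>v. path_ind p v - path_ind (p - 1) v)"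
      by (intro in_col_span_diff path_ind_in_col_span)
    then show ?thesis
      by (rule in_col_span_cong) (use 3 path_ind_Suc[of "p - 1"] in simp)
  qed
qed

end

text \<open>The last column of \<open>P_mat\<close> meets the zero diagonal entry, so it is free; it is chosen to
  make \<open>P_mat\<close> unimodular.\<close>

definition P_mat :: "nat \<Rightarrow> int mat" where
  "P_mat n = mat n n (\<lambda>(v, c). if c = 0 then 1 else if c < (n + 1) div 2 then F_vec n c v
      else if c < n - 1 then - T_vec n (n - 1 - c) v else vertex_ind 0 v)"

definition V_mat :: "nat \<Rightarrow> int mat" where
  "V_mat n = mat n n (\<lambda>(i, c). if (n + 1) div 2 \<le> c \<and> c < n - 1
      then cheb_coeff c i - cheb_coeff (n - 1 - c) i else cheb_coeff c i)"

definition snf_entry :: "nat \<Rightarrow> nat \<Rightarrow> int" where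
  "snf_entry n i = (if i < (n + 1) div 2 then 1 else if i < n - 1 then 2 else 0)"

lemma P_mat_unimodular:
  assumes "5 \<le> n" "\<not> 4 dvd n"
  shows "\<exists>U. unimodular_int n U \<and> U * P_mat n = 1\<^sub>m n"
proof (rule unimodular_left_inverse_if_vertex_ind_in_col_span)
  have col: "in_col_span (P_mat n) g" if "c < n" "\<And>v. v < n \<Longrightarrow> g v = P_mat n $$ (v, c)" for c g
    using in_col_span_col[of c "P_mat n"] that by (auto simp: P_mat_def elim: in_col_span_cong)
  show "in_col_span (P_mat n) (vertex_ind p)" for p
  proof (rule vertex_ind_in_col_span[OF assms])
    show "in_col_span (P_mat n) (\<lambda>_. 1)"
      by (rule col[of 0]) (use assms in \<open>auto simp: P_mat_def\<close>)
    show "in_col_span (P_mat n) (vertex_ind 0)"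
      by (rule col[of "n - 1"]) (use assms in \<open>auto simp: P_mat_def\<close>)
    show "in_col_span (P_mat n) (F_vec n j)" if "1 \<le> j" "j < (n + 1) div 2" for j
      by (rule col[of j]) (use that in \<open>auto simp: P_mat_def\<close>)
    show "in_col_span (P_mat n) (T_vec n j)" if "1 \<le> j" "j < n div 2" for j
    proof -
      have "in_col_span (P_mat n) (\<lambda>v. - T_vec n j v)"
        by (rule col[of "n - 1 - j"]) (use that in \<open>auto simp: P_mat_def\<close>)
      from in_col_span_mult[OF this, of "- 1"] show ?thesis
        by simp
    qed
  qed (simp add: P_mat_def)
qed (simp add: P_mat_def)

lemma V_mat_unimodular: "unimodular_int n (V_mat n)"
proof -
  have "upper_triangular (V_mat n)"
    unfolding upper_triangular_def V_mat_def by (auto simp: cheb_coeff_eq_0)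
  then have "det (V_mat n) = prod_list (diag_mat (V_mat n))"
    by (rule det_upper_triangular[where n = n]) (simp add: V_mat_def)
  also have "\<dots> = (\<Prod>i = 0..<n. 1)"
    unfolding prod_list_diag_prod by (intro prod.cong) (auto simp: V_mat_def cheb_coeff_diag cheb_coeff_eq_0)
  finally show ?thesis
    unfolding unimodular_int_def by (simp add: V_mat_def)
qed

lemma cheb_walk_eq_F_vec:
  "5 \<le> n \<Longrightarrow> 1 \<le> j \<Longrightarrow> j \<le> n - 2 \<Longrightarrow> v < n \<Longrightarrow> cheb_walk n j v = F_vec n j v"
  by (simp add: cheb_walk_eq_closed cheb_closed_eq_F_vec)

lemma walk_matrix_mult_V_mat_index:
  assumes "v < n" "c < n"
  shows "(walk_matrix n (Dn_adj n) * V_mat n) $$ (v, c) =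
    (if (n + 1) div 2 \<le> c \<and> c < n - 1 then cheb_walk n c v - cheb_walk n (n - 1 - c) v
     else cheb_walk n c v)"
  using assms
  by (auto simp: walk_matrix_def V_mat_def cheb_walk_def walk_vec_def scalar_prod_def
      lessThan_atLeast0 algebra_simps sum_subtractf intro!: sum.cong)

lemma walk_matrix_mult_V_mat:
  assumes n: "5 \<le> n"
  shows "walk_matrix n (Dn_adj n) * V_mat n = P_mat n * mat_diag n (snf_entry n)"
proof (rule eq_matI)
  fix v c
  assume "v < dim_row (P_mat n * mat_diag n (snf_entry n))" "c < dim_col (P_mat n * mat_diag n (snf_entry n))"
  then have vc: "v < n" "c < n"
    by (auto simp: P_mat_def mat_diag_def)
  have rhs: "(P_mat n * mat_diag n (snf_entry n)) $$ (v, c) = P_mat n $$ (v, c) * snf_entry n c"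
    using vc by (subst mat_diag_mult_right[of _ n n]) (auto simp: P_mat_def)
  consider "c = 0" | "1 \<le> c" "c < (n + 1) div 2" | "(n + 1) div 2 \<le> c" "c < n - 1" | "c = n - 1"
    using vc by linarith
  then show "(walk_matrix n (Dn_adj n) * V_mat n) $$ (v, c) = (P_mat n * mat_diag n (snf_entry n)) $$ (v, c)"
  proof cases
    case 1
    with n vc show ?thesis
      unfolding rhs walk_matrix_mult_V_mat_index[OF vc]
      by (simp add: cheb_walk_0 P_mat_def snf_entry_def div_eq_0_iff)
  next
    case 2
    with n vc show ?thesis
      unfolding rhs walk_matrix_mult_V_mat_index[OF vc] by (simp add: cheb_walk_eq_F_vec P_mat_def snf_entry_def)
  next
    case 3
    define j where "j = n - 1 - c"
    have j: "1 \<le> j" "j < n div 2" "n - 1 - j = c"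
      using 3 unfolding j_def by auto
    have "cheb_walk n c v - cheb_walk n j v = - (F_vec n j v - F_vec n (n - 1 - j) v)"
      using 3 j n vc by (simp add: cheb_walk_eq_F_vec)
    also have "\<dots> = - T_vec n j v * 2"
      using F_vec_diff[OF j(1,2)] by simp
    also have "\<dots> = P_mat n $$ (v, c) * snf_entry n c"
    proof -
      have "c \<noteq> 0" "\<not> c < (n + 1) div 2" "c < n - 1"
        using 3 n by auto
      with vc show ?thesis
        unfolding j_def by (simp add: P_mat_def snf_entry_def)
    qed
    finally show ?thesis
      using 3 unfolding rhs walk_matrix_mult_V_mat_index[OF vc] j_def by simp
  next
    case 4
    then have "\<not> c < (n + 1) div 2" "c \<noteq> 0"
      using n by auto
    with 4 show ?thesis
      unfolding rhs walk_matrix_mult_V_mat_index[OF vc]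
      using cheb_walk_top[OF n vc(1)] by (simp add: P_mat_def snf_entry_def)
  qed
qed (auto simp: walk_matrix_def V_mat_def P_mat_def mat_diag_def)

lemma is_smith_normal_form_mat_diag:
  assumes "unimodular_int n U" "unimodular_int n V" "U * M * V = mat_diag n d"
    and "\<And>i. i < n \<Longrightarrow> 0 \<le> d i" "\<And>i. i + 1 < n \<Longrightarrow> d i dvd d (i + 1)"
  shows "is_smith_normal_form n M (mat_diag n d)"
  using assms unfolding is_smith_normal_form_def by (auto simp: mat_diag_def)

theorem theorem1p3:
  fixes n :: nat
  assumes "n \<ge> 4" and "\<not> (4 dvd n)"
  shows "is_smith_normal_form n (walk_matrix n (Dn_adj n))
           (mat n n (\<lambda>(i, j). if i = j then
               (if i < (n + 1) div 2 then 1 else if i < n - 1 then 2 else 0) else 0))"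
proof -
  have n: "5 \<le> n"
    using assms by (cases "n = 4") auto
  have D: "mat n n (\<lambda>(i, j). if i = j then
      (if i < (n + 1) div 2 then 1 else if i < n - 1 then 2 else 0) else 0) = mat_diag n (snf_entry n)"
    by (auto simp: mat_diag_def snf_entry_def)
  obtain U where U: "unimodular_int n U" "U * P_mat n = 1\<^sub>m n"
    using P_mat_unimodular[OF n assms(2)] by blast
  have carrier: "U \<in> carrier_mat n n" "walk_matrix n (Dn_adj n) \<in> carrier_mat n n"
      "V_mat n \<in> carrier_mat n n" "P_mat n \<in> carrier_mat n n"
    using U(1) by (auto simp: unimodular_int_def walk_matrix_def V_mat_def P_mat_def)
  have "U * walk_matrix n (Dn_adj n) * V_mat n = U * (walk_matrix n (Dn_adj n) * V_mat n)"
    by (rule assoc_mult_mat[OF carrier(1-3)])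
  also have "\<dots> = U * (P_mat n * mat_diag n (snf_entry n))"
    by (simp add: walk_matrix_mult_V_mat[OF n])
  also have "\<dots> = (U * P_mat n) * mat_diag n (snf_entry n)"
    by (rule assoc_mult_mat[symmetric, OF carrier(1,4) mat_diag_dim])
  also have "\<dots> = mat_diag n (snf_entry n)"
    using U(2) left_mult_one_mat[OF mat_diag_dim] by simp
  finally show ?thesis
    unfolding D
    by (rule is_smith_normal_form_mat_diag[OF U(1) V_mat_unimodular]) (auto simp: snf_entry_def)
qed

end
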